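(* Let $K$ be a valued field and $d\ge 1$. Then the VC-dimension of $\operatorname{Conv}_{K^d}$ is exactly $d+1$: some subset of $K^d$ of size $d+1$ is shattered by $\operatorname{Conv}_{K^d}$, and no subset of size $d+2$ is.
   Context: $K$ is a field with valuation $\nu$ and valuation ring $\mathcal{O}=\{x:\nu(x)\ge0\}$. A set $X\subseteq K^d$ is convex if it is closed under combinations $\sum_{i=1}^n\alpha_ix_i$ with $x_i\in X$, $\alpha_i\in\mathcal{O}$, $\sum\alpha_i=1$; $\operatorname{Conv}_{K^d}$ is the family of all convex subsets of $K^d$. A family $\mathcal{F}\subseteq\mathcal{P}(X)$ shatters $Y\subseteq X$ if $\{S\cap Y:S\in\mathcal{F}\}=\mathcal{P}(Y)$; the VC-dimension of $\mathcal{F}$ is the largest $k$ such that $\mathcal{F}$ shatters some $k$-element set (or $\infty$). *)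

theory Defs
  imports Main "HOL-Library.Extended_Nat"
begin

text \<open>A (Krull) valuation on a field 'a with value group 'g. The value of 0 is
  the formal symbol infinity; we encode this by only constraining v on nonzero
  elements (v 0 is irrelevant and never used).\<close>
definition valuation :: "('a::field \<Rightarrow> 'g::linordered_ab_group_add) \<Rightarrow> bool" where
  "valuation v \<longleftrightarrow>
     (\<forall>x y. x \<noteq> 0 \<longrightarrow> y \<noteq> 0 \<longrightarrow> v (x * y) = v x + v y) \<and>
     (\<forall>x y. x \<noteq> 0 \<longrightarrow> y \<noteq> 0 \<longrightarrow> x + y \<noteq> 0 \<longrightarrow> min (v x) (v y) \<le> v (x + y))"

text \<open>Valuation ring O = {x. nu x >= 0} (0 has value infinity, so 0 is in O).\<close>
definition val_ring :: "('a::field \<Rightarrow> 'g::linordered_ab_group_add) \<Rightarrow> 'a set" where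
  "val_ring v = {x. x = 0 \<or> 0 \<le> v x}"

text \<open>Points of K^d are functions from a finite index type 'n with CARD('n) = d.\<close>
definition val_convex :: "('a::field \<Rightarrow> 'g::linordered_ab_group_add) \<Rightarrow> ('n \<Rightarrow> 'a) set \<Rightarrow> bool" where
  "val_convex v X \<longleftrightarrow>
     (\<forall>(n::nat) (x::nat \<Rightarrow> 'n \<Rightarrow> 'a) (\<alpha>::nat \<Rightarrow> 'a).
        (\<forall>i<n. x i \<in> X \<and> \<alpha> i \<in> val_ring v) \<and> (\<Sum>i<n. \<alpha> i) = 1 \<longrightarrow>
        (\<lambda>j. \<Sum>i<n. \<alpha> i * x i j) \<in> X)"

definition Conv :: "('a::field \<Rightarrow> 'g::linordered_ab_group_add) \<Rightarrow> ('n \<Rightarrow> 'a) set set" where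
  "Conv v = {X. val_convex v X}"

definition shatters :: "'b set set \<Rightarrow> 'b set \<Rightarrow> bool" where
  "shatters F Y \<longleftrightarrow> {S \<inter> Y | S. S \<in> F} = Pow Y"

definition vc_dim :: "'b set set \<Rightarrow> enat" where
  "vc_dim F = Sup {enat (card Y) | Y. finite Y \<and> shatters F Y}"

end

theory Submission
  imports Defs "HOL-Analysis.Cartesian_Space"
begin

(* The d + 1 vertices 0, e_1, ..., e_d of the standard simplex are shattered: every subset of
   them is cut out by some coordinate hyperplanes x_k = 0 and possibly the hyperplane
   x_1 + ... + x_d = 1, and solution sets of linear equations are convex over any valued field.
   Conversely, any d + 2 points y satisfy a nontrivial affine relation with coefficients l_y
   summing to 0. Dividing by a coefficient l_y0 of least valuation writes y0 as a combination
   of the other points with coefficients in the valuation ring, so no convex set contains the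
   other points without containing y0. *)

lemma val_mult:
  assumes "valuation v" "x \<noteq> 0" "y \<noteq> 0"
  shows "v (x * y) = v x + v y"
  using assms unfolding valuation_def by blast

lemma val_one: "valuation v \<Longrightarrow> v 1 = 0"
  using val_mult[of v 1 1] by simp

lemma val_uminus:
  assumes val: "valuation v" and "x \<noteq> 0"
  shows "v (- x) = v x"
proof -
  have "v (- 1) + v (- 1) = 0"
    using val_mult[OF val, of "- 1" "- 1"] val_one[OF val] by simp
  then have "v (- 1) = 0" by simp
  then show ?thesis
    using val_mult[OF val, of "- 1" x] \<open>x \<noteq> 0\<close> by simp
qed

lemma val_divide:
  assumes val: "valuation v" and "x \<noteq> 0" "y \<noteq> 0"
  shows "v (x / y) = v x - v y"
  using val_mult[OF val, of "x / y" y] assms by (simp add: eq_diff_eq)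

lemma uminus_in_val_ring: "valuation v \<Longrightarrow> x \<in> val_ring v \<Longrightarrow> - x \<in> val_ring v"
  by (cases "x = 0") (auto simp: val_ring_def val_uminus)

lemma divide_in_val_ring:
  assumes "valuation v" "y \<noteq> 0" "x \<noteq> 0 \<Longrightarrow> v y \<le> v x"
  shows "x / y \<in> val_ring v"
  using assms by (cases "x = 0") (auto simp: val_ring_def val_divide)

lemma val_convexD:
  fixes n :: nat
  assumes "val_convex v X" "\<forall>i<n. x i \<in> X \<and> \<alpha> i \<in> val_ring v" "sum \<alpha> {..<n} = 1"
  shows "(\<lambda>j. \<Sum>i<n. \<alpha> i * x i j) \<in> X"
  using assms unfolding val_convex_def by auto

lemma val_convex_sum:
  assumes S: "val_convex v S" and Z: "finite Z" "Z \<subseteq> S"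
    and \<mu>: "\<And>y. y \<in> Z \<Longrightarrow> \<mu> y \<in> val_ring v" "sum \<mu> Z = 1"
  shows "(\<lambda>j. \<Sum>y\<in>Z. \<mu> y * y j) \<in> S"
proof -
  obtain h where h: "bij_betw h {..<card Z} Z"
    using ex_bij_betw_nat_finite[OF Z(1)] by (auto simp: lessThan_atLeast0)
  have reindex: "(\<Sum>i<card Z. f (h i)) = (\<Sum>y\<in>Z. f y)" for f :: "_ \<Rightarrow> 'a"
    using sum.reindex_bij_betw[OF h] .
  have "\<forall>i<card Z. h i \<in> S \<and> \<mu> (h i) \<in> val_ring v"
    using h Z(2) \<mu>(1) by (auto dest: bij_betwE)
  moreover have "(\<Sum>i<card Z. \<mu> (h i)) = 1"
    using reindex \<mu>(2) by simp
  ultimately have "(\<lambda>j. \<Sum>i<card Z. \<mu> (h i) * h i j) \<in> S"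
    by (rule val_convexD[OF S])
  moreover have "(\<Sum>i<card Z. \<mu> (h i) * h i j) = (\<Sum>y\<in>Z. \<mu> y * y j)" for j
    by (rule reindex)
  ultimately show ?thesis by simp
qed

lemma val_convex_UNIV: "val_convex v UNIV"
  unfolding val_convex_def by simp

lemma val_convex_Int: "val_convex v S \<Longrightarrow> val_convex v T \<Longrightarrow> val_convex v (S \<inter> T)"
  unfolding val_convex_def by simp

lemma val_convex_INT: "(\<And>k. k \<in> K \<Longrightarrow> val_convex v (S k)) \<Longrightarrow> val_convex v (\<Inter>k\<in>K. S k)"
  unfolding val_convex_def by (simp add: val_convexD)

lemma val_convex_linear_equation:
  fixes v :: "'a::field \<Rightarrow> 'g::linordered_ab_group_add" and c :: "'n \<Rightarrow> 'a"
  shows "val_convex v {x. (\<Sum>j\<in>J. c j * x j) = b}"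
  unfolding val_convex_def
proof (intro allI impI)
  fix n :: nat and x :: "nat \<Rightarrow> 'n \<Rightarrow> 'a" and \<alpha> :: "nat \<Rightarrow> 'a"
  assume comb: "(\<forall>i<n. x i \<in> {x. (\<Sum>j\<in>J. c j * x j) = b} \<and> \<alpha> i \<in> val_ring v) \<and> sum \<alpha> {..<n} = 1"
  have "(\<Sum>j\<in>J. c j * (\<Sum>i<n. \<alpha> i * x i j)) = (\<Sum>i<n. \<alpha> i * (\<Sum>j\<in>J. c j * x i j))"
    by (simp add: sum_distrib_left mult.left_commute sum.swap[of _ J])
  also have "\<dots> = (\<Sum>i<n. \<alpha> i * b)"
    using comb by simp
  also have "\<dots> = b"
    using comb by (simp add: sum_distrib_right[symmetric])
  finally show "(\<lambda>j. \<Sum>i<n. \<alpha> i * x i j) \<in> {x. (\<Sum>j\<in>J. c j * x j) = b}" by simp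
qed

definition simplex_vertices :: "('n \<Rightarrow> 'a::zero_neq_one) set" where
  "simplex_vertices = insert (\<lambda>_. 0) (range (\<lambda>k j. if j = k then 1 else 0))"

lemma finite_simplex_vertices: "finite (simplex_vertices :: ('n::finite \<Rightarrow> 'a::zero_neq_one) set)"
  by (simp add: simplex_vertices_def)

lemma card_simplex_vertices: "card (simplex_vertices :: ('n::finite \<Rightarrow> 'a::zero_neq_one) set) = CARD('n) + 1"
proof -
  have "inj (\<lambda>k::'n. \<lambda>j. if j = k then 1 else 0 :: 'a)"
    by (rule injI) (metis zero_neq_one)
  moreover have "(\<lambda>_. 0) \<notin> range (\<lambda>k::'n. \<lambda>j. if j = k then 1 else 0 :: 'a)"
    by (auto simp: fun_eq_iff) (metis zero_neq_one)
  ultimately show ?thesis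
    by (simp add: simplex_vertices_def card_image)
qed

lemma shatters_Conv_simplex_vertices:
  fixes v :: "'a::field \<Rightarrow> 'g::linordered_ab_group_add"
  shows "shatters (Conv v) (simplex_vertices :: ('n::finite \<Rightarrow> 'a) set)"
  unfolding shatters_def
proof (intro equalityI subsetI)
  fix T assume "T \<in> {S \<inter> simplex_vertices |S. S \<in> Conv v}"
  then show "T \<in> Pow simplex_vertices" by auto
next
  fix T assume T: "T \<in> Pow (simplex_vertices :: ('n \<Rightarrow> 'a) set)"
  have coordinate: "val_convex v {x :: 'n \<Rightarrow> 'a. x k = 0}" for k
    using val_convex_linear_equation[where J = "{k}" and c = "\<lambda>_. 1" and b = 0] by simp
  have total: "val_convex v {x :: 'n \<Rightarrow> 'a. sum x UNIV = 1}"
    using val_convex_linear_equation[where J = UNIV and c = "\<lambda>_. 1" and b = 1] by simp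
  define C :: "('n \<Rightarrow> 'a) set" where
    "C = (\<Inter>k\<in>{k. (\<lambda>j. if j = k then 1 else 0) \<notin> T}. {x. x k = 0})
       \<inter> (if (\<lambda>_. 0) \<in> T then UNIV else {x. sum x UNIV = 1})"
  have "C \<in> Conv v"
    unfolding C_def Conv_def
    by (auto intro!: val_convex_Int val_convex_INT coordinate total val_convex_UNIV)
  moreover have "C \<inter> simplex_vertices = T"
    using T by (auto simp: C_def simplex_vertices_def split: if_splits)
  ultimately show "T \<in> {S \<inter> simplex_vertices |S. S \<in> Conv v}" by blast
qed

lemma affine_dependence_of_card_gt:
  fixes Y :: "('n::finite \<Rightarrow> 'a::field) set"
  assumes "finite Y" and "CARD('n) + 1 < card Y"
  obtains l where "\<exists>y\<in>Y. l y \<noteq> 0" and "(\<Sum>y\<in>Y. l y) = 0" and "\<And>j. (\<Sum>y\<in>Y. l y * y j) = 0"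
proof -
  (* A linear relation among the vectors (1, y) in K^(d+1) is an affine relation among the y. *)
  define lift :: "('n \<Rightarrow> 'a) \<Rightarrow> 'a ^ 'n option"
    where "lift y = (\<chi> i. case i of None \<Rightarrow> 1 | Some j \<Rightarrow> y j)" for y
  have inj: "inj_on lift Y"
    by (rule inj_onI) (metis (no_types) lift_def option.simps(5) vec_lambda_beta ext)
  have "vec.dim (UNIV :: ('a ^ 'n option) set) < card (lift ` Y)"
    using assms by (simp only: vec_dim_card card_image[OF inj] card_option)
  then have "vec.dependent (lift ` Y)"
    using vec.independent_card_le_dim[of "lift ` Y" UNIV] by (meson not_le subset_UNIV)
  then obtain u where u: "\<exists>w\<in>lift ` Y. u w \<noteq> 0" "(\<Sum>w\<in>lift ` Y. u w *s w) = 0"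
    using vec.dependent_finite[of "lift ` Y"] assms(1) by auto
  have lift_relation: "(\<Sum>y\<in>Y. u (lift y) * lift y $ i) = 0" for i
  proof -
    have "(\<Sum>y\<in>Y. u (lift y) * lift y $ i) = (\<Sum>w\<in>lift ` Y. u w *s w) $ i"
      by (simp add: sum.reindex[OF inj])
    then show ?thesis using u(2) by simp
  qed
  show ?thesis
  proof
    show "\<exists>y\<in>Y. u (lift y) \<noteq> 0" using u(1) by blast
    show "(\<Sum>y\<in>Y. u (lift y)) = 0" using lift_relation[of None] by (simp add: lift_def)
    show "(\<Sum>y\<in>Y. u (lift y) * y j) = 0" for j using lift_relation[of "Some j"] by (simp add: lift_def)
  qed
qed

lemma mem_val_convex_of_affine_relation:
  fixes v :: "'a::field \<Rightarrow> 'g::linordered_ab_group_add" and Y :: "('n \<Rightarrow> 'a) set"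
  assumes val: "valuation v" and S: "val_convex v S"
    and Y: "finite Y" "Y - {y0} \<subseteq> S"
    and rel: "(\<Sum>y\<in>Y. l y) = 0" "\<And>j. (\<Sum>y\<in>Y. l y * y j) = 0"
    and y0: "y0 \<in> Y" "l y0 \<noteq> 0"
    and min: "\<And>y. y \<in> Y \<Longrightarrow> l y \<noteq> 0 \<Longrightarrow> v (l y0) \<le> v (l y)"
  shows "y0 \<in> S"
proof -
  let ?Z = "Y - {y0}"
  define \<mu> where "\<mu> y = - (l y / l y0)" for y
  have "\<mu> y \<in> val_ring v" if "y \<in> ?Z" for y
    unfolding \<mu>_def using that min y0(2)
    by (intro uminus_in_val_ring[OF val] divide_in_val_ring[OF val]) auto
  moreover have "sum \<mu> ?Z = 1"
  proof -
    have "sum l ?Z = - l y0"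
      using rel(1) sum.remove[OF Y(1) y0(1), of l] by (simp add: add_eq_0_iff)
    then show ?thesis
      using y0(2) by (simp add: \<mu>_def sum_negf sum_divide_distrib[symmetric])
  qed
  ultimately have "(\<lambda>j. \<Sum>y\<in>?Z. \<mu> y * y j) \<in> S"
    using Y by (intro val_convex_sum[OF S]) auto
  moreover have "(\<Sum>y\<in>?Z. \<mu> y * y j) = y0 j" for j
  proof -
    have "(\<Sum>y\<in>?Z. l y * y j) = - (l y0 * y0 j)"
      using rel(2)[of j] sum.remove[OF Y(1) y0(1), of "\<lambda>y. l y * y j"] by (simp add: add_eq_0_iff)
    then show ?thesis
      using y0(2) by (simp add: \<mu>_def sum_negf sum_divide_distrib[symmetric])
  qed
  ultimately show ?thesis by simp
qed

lemma not_shatters_Conv: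
  fixes v :: "'a::field \<Rightarrow> 'g::linordered_ab_group_add" and Y :: "('n::finite \<Rightarrow> 'a) set"
  assumes val: "valuation v" and Y: "finite Y" "CARD('n) + 1 < card Y"
  shows "\<not> shatters (Conv v) Y"
proof
  assume shatters: "shatters (Conv v) Y"
  obtain l where l: "\<exists>y\<in>Y. l y \<noteq> 0" "(\<Sum>y\<in>Y. l y) = 0" "\<And>j. (\<Sum>y\<in>Y. l y * y j) = 0"
    using affine_dependence_of_card_gt[OF Y] by blast
  obtain y0 where y0: "is_arg_min (\<lambda>y. v (l y)) (\<lambda>y. y \<in> {y \<in> Y. l y \<noteq> 0}) y0"
    using ex_is_arg_min_if_finite[of "{y \<in> Y. l y \<noteq> 0}" "\<lambda>y. v (l y)"] Y(1) l(1) by auto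
  have "Y - {y0} \<in> {S \<inter> Y |S. S \<in> Conv v}"
    using shatters unfolding shatters_def by blast
  then obtain S where S: "val_convex v S" "S \<inter> Y = Y - {y0}"
    by (auto simp: Conv_def)
  have "y0 \<in> S"
    using y0 S(2) by (intro mem_val_convex_of_affine_relation[OF val S(1) Y(1) _ l(2,3)])
      (auto simp: is_arg_min_linorder)
  then show False
    using y0 S(2) by (auto simp: is_arg_min_def)
qed

lemma vc_dim_eqI:
  assumes "finite Y" "shatters F Y" "\<And>Z. finite Z \<Longrightarrow> shatters F Z \<Longrightarrow> card Z \<le> card Y"
  shows "vc_dim F = enat (card Y)"
  unfolding vc_dim_def by (rule Sup_eqI) (use assms in auto)

theorem theorem4p8:
  fixes v :: "'a::field \<Rightarrow> 'g::linordered_ab_group_add"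
  assumes "valuation v"
  shows "vc_dim (Conv v :: ('n::finite \<Rightarrow> 'a) set set) = enat (card (UNIV :: 'n set) + 1)
    \<and> (\<exists>Y :: ('n \<Rightarrow> 'a) set. finite Y \<and> card Y = card (UNIV :: 'n set) + 1 \<and> shatters (Conv v) Y)
    \<and> (\<forall>Y :: ('n \<Rightarrow> 'a) set. finite Y \<and> card Y = card (UNIV :: 'n set) + 2 \<longrightarrow> \<not> shatters (Conv v) Y)"
proof -
  let ?Y = "simplex_vertices :: ('n \<Rightarrow> 'a) set"
  have Y: "finite ?Y" "card ?Y = CARD('n) + 1" "shatters (Conv v) ?Y"
    by (simp_all add: finite_simplex_vertices card_simplex_vertices shatters_Conv_simplex_vertices)
  have large: "\<not> shatters (Conv v) Z" if "finite Z" "CARD('n) + 1 < card Z" for Z :: "('n \<Rightarrow> 'a) set"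
    using not_shatters_Conv[OF assms that] .
  have "card Z \<le> card ?Y" if "finite Z" "shatters (Conv v) Z" for Z :: "('n \<Rightarrow> 'a) set"
    using large[OF that(1)] that(2) Y(2) by linarith
  then show ?thesis
    using vc_dim_eqI[OF Y(1,3)] Y large by auto
qed

end
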